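(* Let $V$ be a finite ground set with $n=|V|$, let $f:2^V\to\mathbb{R}_{\ge 0}$ be monotone submodular, let $k\ge 1$ be an integer with $n\ge 16k$, and let $OPT=\max_{A\subseteq V,|A|\le k} f(A)$. Let $\tau=\frac{OPT}{2k}$. Draw a random set $S\subseteq V$ containing each element independently with probability $p=4\sqrt{k/n}$, and partition $V$ at random into sets $V_1,\dots,V_m$. Let $G_0=\textsc{ThresholdGreedy}(S,\emptyset,\tau)$, and for each $i$ let $R_i=\textsc{ThresholdFilter}(V_i,G_0,\tau)$ if $|G_0|<k$ and $R_i=\emptyset$ otherwise (the sets $R_i$ are the elements sent to the central machine). Then there is an absolute constant $c>0$ such that, with probability at least $1-e^{-ck}$, the number of elements sent to the central machine satisfies $\big|\bigcup_{i=1}^m R_i\big|\le\sqrt{nk}$.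
   Context: A function $f:2^V\to\mathbb{R}_{\ge0}$ is submodular if $f(A\cup\{e\})-f(A)\ge f(B\cup\{e\})-f(B)$ for all $A\subseteq B\subseteq V$ and $e\notin B$, and monotone if $f(A\cup\{e\})-f(A)\ge 0$ for all $A$ and $e\notin A$. For $A\subseteq V$, $e\in V$ write $f_A(e)=f(A\cup\{e\})-f(A)$. Fix a total order on $V$; all sets are scanned in this order. $\textsc{ThresholdGreedy}(T,G,\tau)$: start with $G'=G$; scan $e\in T$ in the fixed order, and whenever $f_{G'}(e)\ge\tau$ and $|G'|<k$, add $e$ to $G'$; return $G'$. $\textsc{ThresholdFilter}(T,G,\tau)$ returns $\{e\in T: f_G(e)\ge\tau\}$. Here $m$ is the number of machines (the paper takes $m=\sqrt{n/k}$). *)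

theory Defs
  imports "HOL-Probability.Probability"
begin

definition marg :: "(nat set \<Rightarrow> real) \<Rightarrow> nat set \<Rightarrow> nat \<Rightarrow> real" where
  "marg f A e = f (A \<union> {e}) - f A"

definition nonneg_on :: "nat set \<Rightarrow> (nat set \<Rightarrow> real) \<Rightarrow> bool" where
  "nonneg_on V f \<longleftrightarrow> (\<forall>A. A \<subseteq> V \<longrightarrow> f A \<ge> 0)"

definition monotone_set_fun :: "nat set \<Rightarrow> (nat set \<Rightarrow> real) \<Rightarrow> bool" where
  "monotone_set_fun V f \<longleftrightarrow> (\<forall>A e. A \<subseteq> V \<longrightarrow> e \<in> V \<longrightarrow> e \<notin> A \<longrightarrow> marg f A e \<ge> 0)"

definition submodular :: "nat set \<Rightarrow> (nat set \<Rightarrow> real) \<Rightarrow> bool" where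
  "submodular V f \<longleftrightarrow> (\<forall>A B e. A \<subseteq> B \<longrightarrow> B \<subseteq> V \<longrightarrow> e \<in> V \<longrightarrow> e \<notin> B \<longrightarrow>
      marg f A e \<ge> marg f B e)"

definition OPT :: "nat set \<Rightarrow> (nat set \<Rightarrow> real) \<Rightarrow> nat \<Rightarrow> real" where
  "OPT V f k = Max {f A | A. A \<subseteq> V \<and> card A \<le> k}"

text \<open>ThresholdGreedy(T,G,tau): the fixed total order on V is given by the list vs;
  scan elements of T in that order.\<close>
definition threshold_greedy ::
  "(nat set \<Rightarrow> real) \<Rightarrow> nat \<Rightarrow> nat list \<Rightarrow> nat set \<Rightarrow> nat set \<Rightarrow> real \<Rightarrow> nat set" where
  "threshold_greedy f k vs T G \<tau> =
     foldl (\<lambda>G' e. if marg f G' e \<ge> \<tau> \<and> card G' < k then insert e G' else G')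
       G (filter (\<lambda>e. e \<in> T) vs)"

definition threshold_filter :: "(nat set \<Rightarrow> real) \<Rightarrow> nat set \<Rightarrow> nat set \<Rightarrow> real \<Rightarrow> nat set" where
  "threshold_filter f T G \<tau> = {e \<in> T. marg f G e \<ge> \<tau>}"

definition random_subset :: "nat set \<Rightarrow> real \<Rightarrow> nat set pmf" where
  "random_subset V p = map_pmf (\<lambda>g. {x \<in> V. g x}) (Pi_pmf V False (\<lambda>_. bernoulli_pmf p))"

text \<open>Number of elements sent to the central machine, given the sample S and the
  partition V_i = {e \<in> V. \<sigma> e = i}, i = 1..m.\<close>
definition sent_to_central ::
  "(nat set \<Rightarrow> real) \<Rightarrow> nat \<Rightarrow> nat list \<Rightarrow> nat \<Rightarrow> nat set \<Rightarrow> (nat \<Rightarrow> nat) \<Rightarrow> nat set" where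
  "sent_to_central f k vs m S \<sigma> =
     (let V = set vs; \<tau> = OPT V f k / (2 * real k);
          G0 = threshold_greedy f k vs S {} \<tau>;
          R = (\<lambda>i. if card G0 < k then threshold_filter f {e \<in> V. \<sigma> e = i} G0 \<tau> else {})
      in \<Union>i\<in>{1..m}. R i)"

end

theory Submission
  imports Defs
begin

text \<open>
  Call an element a candidate if, when ThresholdGreedy scans it (over all of V, admitting only
  sampled elements), it passes the threshold test while the greedy set is not yet full. By
  submodularity every element that passes the final filter against an unfilled G0 was a
  candidate, so it suffices to show that N = sqrt(n k) candidates but fewer than k additions
  is unlikely. Each candidate is sampled, and then added, independently with probability p;
  induction along the scan bounds the probability of "fewer than j further additions but at
  least r further candidates" by 2^j (1 - p/2)^r, the step being
  p 2^(j-1) + (1 - p) 2^j = 2^j (1 - p/2). For p = 4 sqrt(k/n) this is at most e^(-k).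
  The argument works for any threshold.
\<close>

lemma threshold_greedy_Nil [simp]: "threshold_greedy f k [] T G \<tau> = G"
  by (simp add: threshold_greedy_def)

lemma threshold_greedy_Cons [simp]:
  "threshold_greedy f k (x # xs) T G \<tau> =
    (if \<tau> \<le> marg f G x \<and> card G < k \<and> x \<in> T
     then threshold_greedy f k xs T (insert x G) \<tau>
     else threshold_greedy f k xs T G \<tau>)"
  by (simp add: threshold_greedy_def)

lemma threshold_greedy_insert_notin:
  "x \<notin> set xs \<Longrightarrow> threshold_greedy f k xs (insert x T) G \<tau> = threshold_greedy f k xs T G \<tau>"
  by (induction xs arbitrary: G) auto

lemma threshold_greedy_bounds:
  "G \<subseteq> threshold_greedy f k xs T G \<tau>" "threshold_greedy f k xs T G \<tau> \<subseteq> G \<union> set xs"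
proof (induction xs arbitrary: G)
  case (Cons x xs)
  { case 1 show ?case using Cons.IH(1)[of G] Cons.IH(1)[of "insert x G"] by auto }
  { case 2 show ?case using Cons.IH(2)[of G] Cons.IH(2)[of "insert x G"] by auto }
qed simp_all

lemma card_le_threshold_greedy: "finite G \<Longrightarrow> card G \<le> card (threshold_greedy f k xs T G \<tau>)"
  by (meson card_mono finite_Un finite_set finite_subset threshold_greedy_bounds)

fun threshold_candidates ::
  "(nat set \<Rightarrow> real) \<Rightarrow> nat \<Rightarrow> nat list \<Rightarrow> nat set \<Rightarrow> nat set \<Rightarrow> real \<Rightarrow> nat set" where
  "threshold_candidates f k [] T G \<tau> = {}"
| "threshold_candidates f k (x # xs) T G \<tau> =
    (if \<tau> \<le> marg f G x \<and> card G < k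
     then insert x (threshold_candidates f k xs T (if x \<in> T then insert x G else G) \<tau>)
     else threshold_candidates f k xs T G \<tau>)"

lemma threshold_candidates_insert_notin:
  "x \<notin> set xs \<Longrightarrow> threshold_candidates f k xs (insert x T) G \<tau> = threshold_candidates f k xs T G \<tau>"
  by (induction xs arbitrary: G) auto

lemma threshold_candidates_subset: "threshold_candidates f k xs T G \<tau> \<subseteq> set xs"
  by (induction xs arbitrary: G) auto

lemma threshold_filter_subset_candidates:
  assumes "submodular V f" "G \<union> set xs \<subseteq> V" "distinct xs" "set xs \<inter> G = {}" "finite G"
    and "card (threshold_greedy f k xs T G \<tau>) < k"
  shows "threshold_filter f (set xs) (threshold_greedy f k xs T G \<tau>) \<tau> \<subseteq> threshold_candidates f k xs T G \<tau>"
  using assms(2-)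
proof (induction xs arbitrary: G)
  case Nil
  then show ?case by (simp add: threshold_filter_def)
next
  case (Cons x xs)
  define G' where "G' = (if \<tau> \<le> marg f G x \<and> card G < k \<and> x \<in> T then insert x G else G)"
  define H where "H = threshold_greedy f k xs T G' \<tau>"
  have H: "threshold_greedy f k (x # xs) T G \<tau> = H" by (simp add: H_def G'_def)
  have "threshold_filter f (set xs) H \<tau> \<subseteq> threshold_candidates f k xs T G' \<tau>"
    unfolding H_def using Cons.prems H by (intro Cons.IH) (auto simp: G'_def H_def)
  then have tail: "threshold_filter f (set xs) H \<tau> \<subseteq> threshold_candidates f k (x # xs) T G \<tau>"
    by (auto simp: G'_def)
  have "x \<in> threshold_candidates f k (x # xs) T G \<tau>" if "\<tau> \<le> marg f H x"
  proof (rule ccontr)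
    assume not_cand: "x \<notin> threshold_candidates f k (x # xs) T G \<tau>"
    then have "G' = G" by (auto simp: G'_def)
    then have GH: "G \<subseteq> H" "H \<subseteq> G \<union> set xs"
      unfolding H_def using threshold_greedy_bounds[where G = G and xs = xs] by simp_all
    have "finite H" using GH(2) Cons.prems(4) finite_subset by blast
    then have "card G < k" using card_mono[OF _ GH(1)] Cons.prems(5) H by simp
    then have "marg f G x < \<tau>" using not_cand by (auto split: if_splits)
    moreover have "marg f H x \<le> marg f G x"
    proof -
      have "H \<subseteq> V" "x \<in> V" "x \<notin> H" using GH(2) Cons.prems(1-3) by auto
      then show ?thesis using assms(1) GH(1) unfolding submodular_def by blast
    qed
    ultimately show False using that by simp
  qed
  then show ?case unfolding H using tail by (auto simp: threshold_filter_def)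
qed

lemma set_pmf_random_subset: "S \<in> set_pmf (random_subset A p) \<Longrightarrow> S \<subseteq> A"
  by (auto simp: random_subset_def)

lemma random_subset_insert:
  assumes "finite A" "x \<notin> A"
  shows "random_subset (insert x A) p =
    bernoulli_pmf p \<bind> (\<lambda>b. map_pmf (\<lambda>S. if b then insert x S else S) (random_subset A p))"
proof -
  have "{y \<in> insert x A. (g(x := b)) y} = (if b then insert x {y \<in> A. g y} else {y \<in> A. g y})" for g b
    using assms(2) by auto
  then show ?thesis
    using assms unfolding random_subset_def
    by (simp add: Pi_pmf_insert' map_bind_pmf map_pmf_def[symmetric] map_pmf_comp bind_return_pmf o_def)
qed

lemma prob_random_subset_insert:
  assumes "finite A" "x \<notin> A" "0 \<le> p" "p \<le> 1"
  shows "measure_pmf.prob (random_subset (insert x A) p) E =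
    p * measure_pmf.prob (random_subset A p) {S. insert x S \<in> E} +
    (1 - p) * measure_pmf.prob (random_subset A p) {S \<in> E. x \<notin> S}"
proof -
  let ?M = "random_subset A p"
  have support: "measure_pmf.prob ?M E = measure_pmf.prob ?M {S \<in> E. x \<notin> S}"
    using assms(2) by (intro measure_eq_AE) (auto simp: AE_measure_pmf_iff dest: set_pmf_random_subset)
  have "emeasure (random_subset (insert x A) p) E =
      (\<integral>\<^sup>+b. emeasure (map_pmf (\<lambda>S. if b then insert x S else S) ?M) E \<partial>bernoulli_pmf p)"
    using assms(1,2) by (simp add: random_subset_insert)
  also have "\<dots> = emeasure ?M {S. insert x S \<in> E} * ennreal p + emeasure ?M E * ennreal (1 - p)"
    using assms(3,4) by (simp add: vimage_def)
  also have "\<dots> = ennreal (p * measure_pmf.prob ?M {S. insert x S \<in> E} +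
      (1 - p) * measure_pmf.prob ?M E)"
    using assms(3,4) by (simp add: measure_pmf.emeasure_eq_measure ennreal_mult' mult.commute)
  finally show ?thesis
    using assms(3,4) support by (simp add: measure_pmf.emeasure_eq_measure del: ennreal_plus)
qed

lemma bernoulli_potential_step:
  fixes p :: real
  assumes "0 \<le> p" "p \<le> 1"
  shows "p * (2 ^ j * (1 - p / 2) ^ (r - 1)) + (1 - p) * (2 ^ Suc j * (1 - p / 2) ^ (r - 1))
    \<le> 2 ^ Suc j * (1 - p / 2) ^ r"
proof -
  have "p * (2 ^ j * (1 - p / 2) ^ (r - 1)) + (1 - p) * (2 ^ Suc j * (1 - p / 2) ^ (r - 1))
      = 2 ^ Suc j * (1 - p / 2) ^ Suc (r - 1)"
    by (simp add: algebra_simps)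
  also have "\<dots> \<le> 2 ^ Suc j * (1 - p / 2) ^ r"
    using assms by (intro mult_left_mono power_decreasing) auto
  finally show ?thesis .
qed

lemma prob_few_selected_many_candidates:
  assumes p: "0 \<le> p" "p \<le> 1" and "distinct xs" "finite G" "set xs \<inter> G = {}"
  shows "measure_pmf.prob (random_subset (set xs) p)
      {S. card (threshold_greedy f k xs S G \<tau>) < card G + j \<and> r \<le> card (threshold_candidates f k xs S G \<tau>)}
    \<le> 2 ^ j * (1 - p / 2) ^ r"
  using assms(3-)
proof (induction xs arbitrary: G j r)
  case Nil
  show ?case
  proof (cases "0 < j \<and> r = 0")
    case True
    then show ?thesis by (intro order_trans[OF measure_pmf.prob_le_1]) simp
  next
    case False
    then show ?thesis using p by simp
  qed
next
  case (Cons x xs)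
  let ?M = "random_subset (set xs) p"
  let ?E = "\<lambda>xs G j r. {S. card (threshold_greedy f k xs S G \<tau>) < card G + j \<and>
      r \<le> card (threshold_candidates f k xs S G \<tau>)}"
  have x: "x \<notin> set xs" "x \<notin> G" and G: "set xs \<inter> G = {}" "set xs \<inter> insert x G = {}"
    using Cons.prems by auto
  have IH: "measure_pmf.prob ?M A \<le> 2 ^ j' * (1 - p / 2) ^ r'"
    if "A \<subseteq> ?E xs G' j' r'" "G' = G \<or> G' = insert x G" for A G' j' r'
  proof -
    have "distinct xs" "finite G'" "set xs \<inter> G' = {}"
      using that(2) Cons.prems G by auto
    then have "measure_pmf.prob ?M (?E xs G' j' r') \<le> 2 ^ j' * (1 - p / 2) ^ r'"
      by (rule Cons.IH)
    moreover have "measure_pmf.prob ?M A \<le> measure_pmf.prob ?M (?E xs G' j' r')"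
      using that(1) by (rule measure_pmf.finite_measure_mono) simp
    ultimately show ?thesis by linarith
  qed
  have split: "measure_pmf.prob (random_subset (set (x # xs)) p) (?E (x # xs) G j r) =
      p * measure_pmf.prob ?M {S. insert x S \<in> ?E (x # xs) G j r} +
      (1 - p) * measure_pmf.prob ?M {S \<in> ?E (x # xs) G j r. x \<notin> S}"
    using prob_random_subset_insert[OF _ x(1) p] by simp
  have card_insert_pred: "r - 1 \<le> card C" if "r \<le> card (insert x C)" for C :: "nat set"
    using that by (cases "finite C") (auto simp: card_insert_if split: if_splits)
  consider (rejected) "\<not> (\<tau> \<le> marg f G x \<and> card G < k)" | (exhausted) "j = 0"
    | (candidate) j' where "\<tau> \<le> marg f G x" "card G < k" "j = Suc j'"
    by (meson not0_implies_Suc)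
  then show ?case
  proof cases
    case rejected
    have "{S. insert x S \<in> ?E (x # xs) G j r} \<subseteq> ?E xs G j r"
      "{S \<in> ?E (x # xs) G j r. x \<notin> S} \<subseteq> ?E xs G j r"
      using rejected x(1) by (auto simp: threshold_greedy_insert_notin threshold_candidates_insert_notin)
    from this[THEN IH] have "measure_pmf.prob (random_subset (set (x # xs)) p) (?E (x # xs) G j r) \<le>
        p * (2 ^ j * (1 - p / 2) ^ r) + (1 - p) * (2 ^ j * (1 - p / 2) ^ r)"
      unfolding split using p by (intro add_mono mult_left_mono) auto
    then show ?thesis by (simp add: algebra_simps)
  next
    case exhausted
    then have "?E (x # xs) G j r = {}"
      using card_le_threshold_greedy[OF Cons.prems(2)] by (simp add: not_less del: threshold_greedy_Cons)
    then show ?thesis using p by (simp only: measure_empty) simp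
  next
    case candidate
    have "{S. insert x S \<in> ?E (x # xs) G j r} \<subseteq> ?E xs (insert x G) j' (r - 1)"
      using candidate x Cons.prems(2) card_insert_pred
      by (auto simp: threshold_greedy_insert_notin threshold_candidates_insert_notin)
    moreover have "{S \<in> ?E (x # xs) G j r. x \<notin> S} \<subseteq> ?E xs G j (r - 1)"
      using candidate card_insert_pred by auto
    ultimately have "measure_pmf.prob ?M {S. insert x S \<in> ?E (x # xs) G j r} \<le> 2 ^ j' * (1 - p / 2) ^ (r - 1)"
      "measure_pmf.prob ?M {S \<in> ?E (x # xs) G j r. x \<notin> S} \<le> 2 ^ j * (1 - p / 2) ^ (r - 1)"
      by (auto intro!: IH)
    then have "measure_pmf.prob (random_subset (set (x # xs)) p) (?E (x # xs) G j r) \<le>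
        p * (2 ^ j' * (1 - p / 2) ^ (r - 1)) + (1 - p) * (2 ^ j * (1 - p / 2) ^ (r - 1))"
      unfolding split using p by (intro add_mono mult_left_mono) auto
    also have "\<dots> \<le> 2 ^ j * (1 - p / 2) ^ r"
      using bernoulli_potential_step[OF p] candidate(3) by simp
    finally show ?thesis .
  qed
qed

lemma card_sent_to_central_le:
  fixes vs :: "nat list" and f :: "nat set \<Rightarrow> real" and k :: nat
  defines "\<tau> \<equiv> OPT (set vs) f k / (2 * real k)"
  assumes "distinct vs" "submodular (set vs) f"
  shows "card (sent_to_central f k vs m S \<sigma>) \<le>
    (if card (threshold_greedy f k vs S {} \<tau>) < k then card (threshold_candidates f k vs S {} \<tau>) else 0)"
proof (cases "card (threshold_greedy f k vs S {} \<tau>) < k")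
  case True
  let ?G0 = "threshold_greedy f k vs S {} \<tau>"
  have "threshold_filter f {e \<in> set vs. \<sigma> e = i} ?G0 \<tau> \<subseteq> threshold_filter f (set vs) ?G0 \<tau>" for i
    by (auto simp: threshold_filter_def)
  also have "\<dots> \<subseteq> threshold_candidates f k vs S {} \<tau>"
    using assms(2,3) True by (intro threshold_filter_subset_candidates) auto
  finally have "sent_to_central f k vs m S \<sigma> \<subseteq> threshold_candidates f k vs S {} \<tau>"
    using True unfolding sent_to_central_def Let_def \<tau>_def by auto
  then show ?thesis
    using True by (simp add: card_mono[OF finite_subset[OF threshold_candidates_subset]])
next
  case False
  then show ?thesis unfolding sent_to_central_def Let_def \<tau>_def by simp
qed

lemma prob_pair_pmf_ge_compl:
  assumes "\<And>x y. x \<notin> B \<Longrightarrow> (x, y) \<in> E"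
  shows "1 - measure_pmf.prob M B \<le> measure_pmf.prob (pair_pmf M N) E"
proof -
  have "1 - measure_pmf.prob M B = measure_pmf.prob M (- B)"
    using measure_pmf.prob_compl[of B M] by (simp add: Compl_eq_Diff_UNIV)
  also have "\<dots> = measure_pmf.prob (pair_pmf M N) (fst -` (- B))"
    by (metis map_fst_pair_pmf measure_map_pmf)
  also have "\<dots> \<le> measure_pmf.prob (pair_pmf M N) E"
    using assms by (intro measure_pmf.finite_measure_mono) auto
  finally show ?thesis .
qed

lemma two_power_mult_power_le_exp:
  fixes p :: real
  assumes "0 \<le> p" "p \<le> 2" "4 * real k \<le> p * real N"
  shows "2 ^ k * (1 - p / 2) ^ N \<le> exp (- real k)"
proof -
  have "(1 - p / 2) ^ N \<le> exp (- (p / 2)) ^ N"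
    using assms(2) exp_ge_add_one_self[of "- (p / 2)"] by (intro power_mono) auto
  also have "\<dots> = exp (- (p * real N / 2))"
    by (simp add: exp_of_nat_mult[symmetric] mult.commute)
  also have "\<dots> \<le> exp (- 2 * real k)"
    using assms(3) by simp
  finally have decay: "(1 - p / 2) ^ N \<le> exp (- 2 * real k)" .
  have "(2::real) ^ k \<le> exp 1 ^ k"
    using exp_ge_add_one_self[of 1] by (intro power_mono) auto
  then have growth: "(2::real) ^ k \<le> exp (real k)"
    by (simp add: exp_of_nat_mult[symmetric])
  have "2 ^ k * (1 - p / 2) ^ N \<le> exp (real k) * exp (- 2 * real k)"
    using assms(2) by (intro mult_mono growth decay) auto
  also have "\<dots> = exp (- real k)"
    by (simp flip: exp_add)
  finally show ?thesis .
qed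

lemma sampling_rate_bounds:
  fixes k n :: nat
  assumes "1 \<le> k" "16 * k \<le> n"
  defines "p \<equiv> 4 * sqrt (real k / real n)"
  shows "p \<le> 1" "4 * real k \<le> p * real (nat \<lceil>sqrt (real n * real k)\<rceil>)"
proof -
  have n: "real n > 0" using assms(1,2) by simp
  have "real k / real n \<le> 1 / 16" using assms(2) n by (simp add: field_simps)
  then have "sqrt (real k / real n) \<le> sqrt (1 / 16)" by (rule real_sqrt_le_mono)
  also have "sqrt (1 / 16) = (1 / 4 :: real)" by (simp add: real_sqrt_divide)
  finally show "p \<le> 1" unfolding p_def by simp
  have "p * sqrt (real n * real k) = 4 * sqrt (real k / real n * (real n * real k))"
    unfolding p_def real_sqrt_mult by simp
  also have "real k / real n * (real n * real k) = real k ^ 2"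
    using n by (simp add: field_simps power2_eq_square)
  finally have "p * sqrt (real n * real k) = 4 * real k" by simp
  moreover have "p * sqrt (real n * real k) \<le> p * real (nat \<lceil>sqrt (real n * real k)\<rceil>)"
    unfolding p_def by (intro mult_left_mono) (linarith, simp)
  ultimately show "4 * real k \<le> p * real (nat \<lceil>sqrt (real n * real k)\<rceil>)" by simp
qed

lemma prob_card_sent_to_central_le:
  fixes vs :: "nat list" and f :: "nat set \<Rightarrow> real" and P :: "(nat \<Rightarrow> nat) pmf"
  assumes dist: "distinct vs" and k: "k \<ge> 1" and n: "length vs \<ge> 16 * k"
    and sub: "submodular (set vs) f"
  shows "1 - exp (- real k) \<le> measure_pmf.prob
      (pair_pmf (random_subset (set vs) (4 * sqrt (real k / real (length vs)))) P)
      {(S, \<sigma>). real (card (sent_to_central f k vs m S \<sigma>)) \<le> sqrt (real (length vs) * real k)}"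
proof -
  define p where "p = 4 * sqrt (real k / real (length vs))"
  define N where "N = nat \<lceil>sqrt (real (length vs) * real k)\<rceil>"
  define \<tau> where "\<tau> = OPT (set vs) f k / (2 * real k)"
  define Bad where "Bad = {S. card (threshold_greedy f k vs S {} \<tau>) < k \<and>
      N \<le> card (threshold_candidates f k vs S {} \<tau>)}"
  have p: "0 \<le> p" "p \<le> 1" "4 * real k \<le> p * real N"
    using sampling_rate_bounds[OF k n] by (auto simp: p_def N_def)
  have "measure_pmf.prob (random_subset (set vs) p) Bad \<le> 2 ^ k * (1 - p / 2) ^ N"
    using prob_few_selected_many_candidates[OF p(1,2) dist, of "{}"] by (simp add: Bad_def)
  also have "\<dots> \<le> exp (- real k)"
    using p by (intro two_power_mult_power_le_exp) auto
  finally have Bad_small: "measure_pmf.prob (random_subset (set vs) p) Bad \<le> exp (- real k)" .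
  have "real (card (sent_to_central f k vs m S \<sigma>)) \<le> sqrt (real (length vs) * real k)"
    if "S \<notin> Bad" for S \<sigma>
  proof -
    have "card (sent_to_central f k vs m S \<sigma>) < N \<or> card (sent_to_central f k vs m S \<sigma>) = 0"
      using card_sent_to_central_le[OF dist sub, where k = k and m = m and S = S and \<sigma> = \<sigma>, folded \<tau>_def]
        that by (auto simp: Bad_def split: if_splits)
    then show ?thesis unfolding N_def by (elim disjE) (linarith, simp)
  qed
  then have "1 - measure_pmf.prob (random_subset (set vs) p) Bad \<le> measure_pmf.prob
      (pair_pmf (random_subset (set vs) p) P)
      {(S, \<sigma>). real (card (sent_to_central f k vs m S \<sigma>)) \<le> sqrt (real (length vs) * real k)}"
    by (intro prob_pair_pmf_ge_compl) auto
  with Bad_small show ?thesis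
    unfolding p_def by linarith
qed

theorem lemma2:
  shows "\<exists>c::real. c > 0 \<and>
    (\<forall>(vs::nat list) (f::nat set \<Rightarrow> real) (k::nat) (m::nat) (P::(nat \<Rightarrow> nat) pmf).
      distinct vs \<longrightarrow> k \<ge> 1 \<longrightarrow> length vs \<ge> 16 * k \<longrightarrow>
      nonneg_on (set vs) f \<longrightarrow> monotone_set_fun (set vs) f \<longrightarrow> submodular (set vs) f \<longrightarrow>
      m \<ge> 1 \<longrightarrow> (\<forall>\<sigma>\<in>set_pmf P. \<forall>e\<in>set vs. \<sigma> e \<in> {1..m}) \<longrightarrow>
      measure_pmf.prob
        (pair_pmf (random_subset (set vs) (4 * sqrt (real k / real (length vs)))) P)
        {(S, \<sigma>). real (card (sent_to_central f k vs m S \<sigma>)) \<le> sqrt (real (length vs) * real k)}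
      \<ge> 1 - exp (- c * real k))"
  by (intro exI[of _ 1]) (auto intro: prob_card_sent_to_central_le)

end
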